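(* For every integer $n\ge 3$, the crown graph $K_{n,n}\setminus M$, where $M$ is a perfect matching, is a distance-transitive graph of diameter $3$ with intersection array $\{n-1,n-2,1;1,n-2,n-1\}$. Coloring each pair of distinct vertices by $b$, $a$, $c$ according as their distance is $1$, $2$, $3$ yields a representation of the relation algebra $26_{65}$ on $2n$ vertices, and this representation is algebraic.
   Context: A connected graph is distance-transitive if whenever $\operatorname{dist}(x,y)=\operatorname{dist}(u,v)$ some automorphism maps $x\mapsto u$, $y\mapsto v$. A distance-regular graph of diameter $3$ has intersection array $\{b_0,b_1,b_2;c_1,c_2,c_3\}$ where, for $\operatorname{dist}(x,y)=i$, $b_i$ (resp. $c_i$) is the number of neighbours of $y$ at distance $i+1$ (resp. $i-1$) from $x$. A cycle type is the multiset of colors of the sides of a triangle, e.g. $abb$ = one side $a$, two sides $b$. $26_{65}$ is the finite symmetric integral relation algebra with atoms $1',a,b,c$ whose mandatory diversity cycle types are exactly $aaa, abb, abc$ (all of $bbb,ccc,baa,acc,caa,bcc,cbb$ forbidden). A representation on a set $X$ is a coloring of all 2-element subsets of $X$ by $a,b,c$, each color used, such that: for every mandatory type $\{h,i,j\}$, every edge $\{x,y\}$ colored $h$ (for each choice of $h$ among the type's colors) and each ordering $(i,j)$ of the remaining two colors, some $z$ has $\{x,z\}$ colored $i$, $\{z,y\}$ colored $j$; and no triangle of a forbidden type occurs. A representation on a finite set is algebraic if each color class (viewed as a set of ordered pairs, together with the diagonal as the identity class) is a single orbit on ordered pairs of the group of color-preserving permutations of $X$. *)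

theory Defs
  imports Main "HOL-Library.Multiset"
begin

fun walk :: "'v set \<Rightarrow> ('v \<Rightarrow> 'v \<Rightarrow> bool) \<Rightarrow> nat \<Rightarrow> 'v \<Rightarrow> 'v \<Rightarrow> bool" where
  "walk V adj 0 x y = (x = y)"
| "walk V adj (Suc k) x y = (\<exists>z\<in>V. adj x z \<and> walk V adj k z y)"

definition connected_graph :: "'v set \<Rightarrow> ('v \<Rightarrow> 'v \<Rightarrow> bool) \<Rightarrow> bool" where
  "connected_graph V adj \<longleftrightarrow> (\<forall>x\<in>V. \<forall>y\<in>V. \<exists>k. walk V adj k x y)"

definition gdist :: "'v set \<Rightarrow> ('v \<Rightarrow> 'v \<Rightarrow> bool) \<Rightarrow> 'v \<Rightarrow> 'v \<Rightarrow> nat" where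
  "gdist V adj x y = (LEAST k. walk V adj k x y)"

definition has_diameter :: "'v set \<Rightarrow> ('v \<Rightarrow> 'v \<Rightarrow> bool) \<Rightarrow> nat \<Rightarrow> bool" where
  "has_diameter V adj d \<longleftrightarrow> connected_graph V adj \<and>
     (\<forall>x\<in>V. \<forall>y\<in>V. gdist V adj x y \<le> d) \<and> (\<exists>x\<in>V. \<exists>y\<in>V. gdist V adj x y = d)"

definition graph_automorphism :: "'v set \<Rightarrow> ('v \<Rightarrow> 'v \<Rightarrow> bool) \<Rightarrow> ('v \<Rightarrow> 'v) \<Rightarrow> bool" where
  "graph_automorphism V adj f \<longleftrightarrow> bij_betw f V V \<and>
     (\<forall>p\<in>V. \<forall>q\<in>V. adj p q \<longleftrightarrow> adj (f p) (f q))"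

definition distance_transitive :: "'v set \<Rightarrow> ('v \<Rightarrow> 'v \<Rightarrow> bool) \<Rightarrow> bool" where
  "distance_transitive V adj \<longleftrightarrow> connected_graph V adj \<and>
     (\<forall>x\<in>V. \<forall>y\<in>V. \<forall>u\<in>V. \<forall>v\<in>V. gdist V adj x y = gdist V adj u v \<longrightarrow>
        (\<exists>f. graph_automorphism V adj f \<and> f x = u \<and> f y = v))"

text \<open>Distance-regular of diameter d = length bs = length cs with intersection array
  {bs!0,...,bs!(d-1); cs!0,...,cs!(d-1)} = {b_0,...,b_(d-1); c_1,...,c_d}.\<close>
definition has_intersection_array ::
  "'v set \<Rightarrow> ('v \<Rightarrow> 'v \<Rightarrow> bool) \<Rightarrow> nat list \<Rightarrow> nat list \<Rightarrow> bool" where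
  "has_intersection_array V adj bs cs \<longleftrightarrow>
     length bs = length cs \<and> has_diameter V adj (length bs) \<and>
     (\<forall>x\<in>V. \<forall>y\<in>V. \<forall>i<length bs. gdist V adj x y = i \<longrightarrow>
        card {z\<in>V. adj y z \<and> gdist V adj x z = i + 1} = bs ! i) \<and>
     (\<forall>x\<in>V. \<forall>y\<in>V. \<forall>i. 1 \<le> i \<and> i \<le> length cs \<longrightarrow> gdist V adj x y = i \<longrightarrow>
        card {z\<in>V. adj y z \<and> gdist V adj x z = i - 1} = cs ! (i - 1))"

datatype color = ColA | ColB | ColC

definition mandatory_26_65 :: "color multiset set" where
  "mandatory_26_65 = {{#ColA, ColA, ColA#}, {#ColA, ColB, ColB#}, {#ColA, ColB, ColC#}}"

text \<open>A representation on X: col colours 2-element subsets (so it is symmetric on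
  distinct pairs; its values on the diagonal are irrelevant).\<close>
definition representation_26_65 :: "'v set \<Rightarrow> ('v \<Rightarrow> 'v \<Rightarrow> color) \<Rightarrow> bool" where
  "representation_26_65 X col \<longleftrightarrow>
     (\<forall>x\<in>X. \<forall>y\<in>X. x \<noteq> y \<longrightarrow> col x y = col y x) \<and>
     (\<forall>h. \<exists>x\<in>X. \<exists>y\<in>X. x \<noteq> y \<and> col x y = h) \<and>
     (\<forall>T\<in>mandatory_26_65. \<forall>x\<in>X. \<forall>y\<in>X. \<forall>i j. x \<noteq> y \<and> {#col x y, i, j#} = T \<longrightarrow>
        (\<exists>z\<in>X. z \<noteq> x \<and> z \<noteq> y \<and> col x z = i \<and> col z y = j)) \<and>
     (\<forall>x\<in>X. \<forall>y\<in>X. \<forall>z\<in>X. x \<noteq> y \<and> y \<noteq> z \<and> x \<noteq> z \<longrightarrow>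
        {#col x y, col y z, col x z#} \<in> mandatory_26_65)"

definition color_preserving_perms :: "'v set \<Rightarrow> ('v \<Rightarrow> 'v \<Rightarrow> color) \<Rightarrow> ('v \<Rightarrow> 'v) set" where
  "color_preserving_perms X col =
     {f. bij_betw f X X \<and> (\<forall>x\<in>X. \<forall>y\<in>X. x \<noteq> y \<longrightarrow> col (f x) (f y) = col x y)}"

definition pair_orbit :: "('v \<Rightarrow> 'v) set \<Rightarrow> 'v \<times> 'v \<Rightarrow> ('v \<times> 'v) set" where
  "pair_orbit G p = {(f (fst p), f (snd p)) | f. f \<in> G}"

definition color_class :: "'v set \<Rightarrow> ('v \<Rightarrow> 'v \<Rightarrow> color) \<Rightarrow> color \<Rightarrow> ('v \<times> 'v) set" where
  "color_class X col h = {(x, y). x \<in> X \<and> y \<in> X \<and> x \<noteq> y \<and> col x y = h}"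

definition algebraic_representation :: "'v set \<Rightarrow> ('v \<Rightarrow> 'v \<Rightarrow> color) \<Rightarrow> bool" where
  "algebraic_representation X col \<longleftrightarrow> finite X \<and>
     (\<forall>R \<in> {Id_on X} \<union> range (color_class X col).
        \<exists>p\<in>R. R = pair_orbit (color_preserving_perms X col) p)"

text \<open>Vertices (i, s) with i < n and s a side; the removed matching is {(i,False),(i,True)}.\<close>
definition crown_vertices :: "nat \<Rightarrow> (nat \<times> bool) set" where
  "crown_vertices n = {0..<n} \<times> (UNIV :: bool set)"

definition crown_adj :: "nat \<times> bool \<Rightarrow> nat \<times> bool \<Rightarrow> bool" where
  "crown_adj p q \<longleftrightarrow> snd p \<noteq> snd q \<and> fst p \<noteq> fst q"

definition crown_coloring :: "nat \<Rightarrow> nat \<times> bool \<Rightarrow> nat \<times> bool \<Rightarrow> color" where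
  "crown_coloring n p q =
     (let d = gdist (crown_vertices n) crown_adj p q in
      if d = 1 then ColB else if d = 2 then ColA else ColC)"

end

theory Submission
  imports Defs "HOL-Combinatorics.Transposition"
begin

text \<open>Write a vertex of the crown graph as (a, s) with index a < n and side s. The distance
  between two vertices is determined by whether they share their side and whether they share
  their index: 0 for equal vertices, 1 for different sides and indices, 2 for the same side,
  3 for a vertex and its matched partner (for n \<ge> 3 a third index provides the paths of
  length 2 and 3; bipartiteness rules out shorter ones). A permutation of the indices combined
  with an optional exchange of the sides preserves both relations, and such maps send any pair of
  vertices to any other pair with the same relations. This gives distance-transitivity and, since
  the coloring is a function of the distance, that the color classes are orbits. The
  intersection numbers and the triangle types are then read off by counting indices.\<close>

lemma bij_betw_map_pair:
  assumes "a \<in> A" "b \<in> A" "c \<in> A" "d \<in> A" and "a = b \<longleftrightarrow> c = d"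
  obtains \<sigma> where "bij_betw \<sigma> A A" "\<sigma> a = c" "\<sigma> b = d"
proof
  let ?\<tau> = "transpose a c"
  let ?\<sigma> = "transpose (?\<tau> b) d \<circ> ?\<tau>"
  have "?\<tau> b \<in> A" using assms by (auto simp: transpose_def)
  then show "bij_betw ?\<sigma> A A"
    using assms by (intro bij_betw_trans[of _ A A] bij_betw_transpose_iff) auto
  show "?\<sigma> a = c" "?\<sigma> b = d"
    using assms by (auto simp: transpose_def)
qed

lemma walk_parity:
  fixes side :: "'v \<Rightarrow> bool"
  assumes "\<And>p q. adj p q \<Longrightarrow> side p \<noteq> side q"
  shows "walk V adj k x y \<Longrightarrow> side x = side y \<longleftrightarrow> even k"
proof (induction k arbitrary: x)
  case (Suc k)
  then obtain z where "adj x z" "walk V adj k z y" by auto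
  with Suc.IH assms show ?case by (metis even_Suc)
qed simp

lemma gdist_eqI:
  assumes "walk V adj d x y" and "\<And>k. walk V adj k x y \<Longrightarrow> d \<le> k"
  shows "gdist V adj x y = d"
  unfolding gdist_def using assms by (rule Least_equality)

lemma card_filter_if_eq:
  assumes "finite A"
  shows "card {c \<in> A. (if c = a then p else q) = j} =
    (if a \<in> A \<and> p = j then 1 else 0) + (if q = j then card (A - {a}) else 0)"
proof -
  have "{c \<in> A. (if c = a then p else q) = j} =
    (if a \<in> A \<and> p = j then {a} else {}) \<union> (if q = j then A - {a} else {})"
    by auto
  moreover have "a \<in> A \<Longrightarrow> Suc (card (A - {a})) = card A"
    using assms by (rule card_Suc_Diff1)
  ultimately show ?thesis using assms by (simp add: card_insert_if del: card_Diff_singleton_if)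
qed

text \<open>Two pairs have the same type iff they lie in the same member of
  {Id_on X} \<union> range (color_class X col).\<close>

definition same_pair_type :: "('v \<Rightarrow> 'v \<Rightarrow> color) \<Rightarrow> 'v \<times> 'v \<Rightarrow> 'v \<times> 'v \<Rightarrow> bool" where
  "same_pair_type col p q \<longleftrightarrow>
     (fst p = snd p \<longleftrightarrow> fst q = snd q) \<and> (fst p \<noteq> snd p \<longrightarrow> col (fst p) (snd p) = col (fst q) (snd q))"

lemma same_pair_type_color_preserving_perm:
  assumes "f \<in> color_preserving_perms X col" "x \<in> X" "y \<in> X"
  shows "f x \<in> X" "f y \<in> X" "same_pair_type col (x, y) (f x, f y)"
proof -
  have "bij_betw f X X" using assms(1) by (simp add: color_preserving_perms_def)
  then show "f x \<in> X" "f y \<in> X" using assms(2,3) by (auto dest: bij_betwE)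
  have "f x = f y \<longleftrightarrow> x = y"
    using \<open>bij_betw f X X\<close> assms(2,3) by (auto simp: bij_betw_def inj_on_eq_iff)
  with assms show "same_pair_type col (x, y) (f x, f y)"
    by (auto simp: same_pair_type_def color_preserving_perms_def)
qed

lemma pair_orbit_color_preserving_perms:
  assumes "x \<in> X" "y \<in> X"
    and transitive: "\<And>u v. u \<in> X \<Longrightarrow> v \<in> X \<Longrightarrow> same_pair_type col (x, y) (u, v) \<Longrightarrow>
       \<exists>f\<in>color_preserving_perms X col. f x = u \<and> f y = v"
  shows "pair_orbit (color_preserving_perms X col) (x, y) =
    {(u, v). u \<in> X \<and> v \<in> X \<and> same_pair_type col (x, y) (u, v)}"
  using same_pair_type_color_preserving_perm[OF _ assms(1,2)] transitive
  by (fastforce simp: pair_orbit_def)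

lemma algebraic_representationI:
  assumes "finite X" "x\<^sub>0 \<in> X"
    and colors_used: "\<And>h. \<exists>x\<in>X. \<exists>y\<in>X. x \<noteq> y \<and> col x y = h"
    and transitive: "\<And>x y u v. x \<in> X \<Longrightarrow> y \<in> X \<Longrightarrow> u \<in> X \<Longrightarrow> v \<in> X \<Longrightarrow>
       same_pair_type col (x, y) (u, v) \<Longrightarrow> \<exists>f\<in>color_preserving_perms X col. f x = u \<and> f y = v"
  shows "algebraic_representation X col"
  unfolding algebraic_representation_def
proof (intro conjI ballI)
  fix R assume "R \<in> {Id_on X} \<union> range (color_class X col)"
  then obtain x y where xy: "x \<in> X" "y \<in> X"
    and R: "R = {(u, v). u \<in> X \<and> v \<in> X \<and> same_pair_type col (x, y) (u, v)}"
  proof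
    assume "R \<in> {Id_on X}"
    then show thesis using that[of x\<^sub>0 x\<^sub>0] assms(2) by (auto simp: same_pair_type_def Id_on_def)
  next
    assume "R \<in> range (color_class X col)"
    then obtain h where "R = color_class X col h" by blast
    moreover obtain x y where "x \<in> X" "y \<in> X" "x \<noteq> y" "col x y = h" using colors_used by blast
    ultimately show thesis by (intro that[of x y]) (auto simp: same_pair_type_def color_class_def)
  qed
  have "(x, y) \<in> R" using xy R by (simp add: same_pair_type_def)
  moreover have "R = pair_orbit (color_preserving_perms X col) (x, y)"
    unfolding R using pair_orbit_color_preserving_perms[OF xy] transitive xy by blast
  ultimately show "\<exists>p\<in>R. R = pair_orbit (color_preserving_perms X col) p" by blast
qed (rule assms(1))

lemma mem_crown_vertices [simp]: "x \<in> crown_vertices n \<longleftrightarrow> fst x < n"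
  by (cases x) (simp add: crown_vertices_def)

lemma third_index:
  fixes n :: nat
  assumes "3 \<le> n"
  obtains k where "k < n" "k \<noteq> a" "k \<noteq> b"
proof -
  have "\<exists>k\<in>{0, 1, 2::nat}. k \<notin> {a, b}" by (cases "a = 0"; cases "b = 1") auto
  with assms show ?thesis by (force intro: that)
qed

definition crown_dist :: "nat \<times> bool \<Rightarrow> nat \<times> bool \<Rightarrow> nat" where
  "crown_dist x y =
     (if x = y then 0 else if snd x = snd y then 2 else if fst x = fst y then 3 else 1)"

lemma crown_dist_eq_iff:
  "crown_dist x y = crown_dist u v \<longleftrightarrow>
     (fst x = fst y \<longleftrightarrow> fst u = fst v) \<and> (snd x = snd y \<longleftrightarrow> snd u = snd v)"
  by (auto simp: crown_dist_def prod_eq_iff)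

lemma walk_crown_dist:
  assumes "3 \<le> n" "x \<in> crown_vertices n" "y \<in> crown_vertices n"
  shows "walk (crown_vertices n) crown_adj (crown_dist x y) x y"
proof -
  obtain a s b t where xy: "x = (a, s)" "y = (b, t)" by fastforce
  obtain k where k: "k < n" "k \<noteq> a" "k \<noteq> b" using third_index[OF assms(1)] .
  obtain m where m: "m < n" "m \<noteq> a" "m \<noteq> k" using third_index[OF assms(1)] .
  consider "x = y" | "s = t" "a \<noteq> b" | "s \<noteq> t" "a = b" | "s \<noteq> t" "a \<noteq> b"
    using xy by blast
  then show ?thesis
  proof cases
    case 2
    then show ?thesis using assms xy k
      by (auto simp: crown_dist_def crown_adj_def numeral_2_eq_2 intro!: bexI[of _ "(k, \<not> s)"])
  next
    case 3
    have "crown_adj (a, s) (k, \<not> s)" "crown_adj (k, \<not> s) (m, s)" "crown_adj (m, s) (b, t)"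
      using 3 k m by (auto simp: crown_adj_def)
    moreover have "(k, \<not> s) \<in> crown_vertices n" "(m, s) \<in> crown_vertices n"
      using k m by auto
    ultimately have "walk (crown_vertices n) crown_adj 3 x y"
      using assms(3) unfolding xy numeral_3_eq_3 walk.simps by blast
    with 3 xy show ?thesis by (simp add: crown_dist_def)
  qed (use assms xy in \<open>auto simp: crown_dist_def crown_adj_def\<close>)
qed

lemma crown_dist_le_walk:
  assumes "walk V crown_adj k x y"
  shows "crown_dist x y \<le> k"
proof -
  have "snd x = snd y \<longleftrightarrow> even k"
    using walk_parity[of crown_adj snd] assms by (auto simp: crown_adj_def)
  moreover have "k = 1 \<Longrightarrow> crown_adj x y" using assms by auto
  ultimately show ?thesis using assms
    by (cases "k \<le> 2") (auto simp: crown_dist_def crown_adj_def le_Suc_eq numeral_2_eq_2)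
qed

lemma gdist_crown:
  assumes "3 \<le> n" "x \<in> crown_vertices n" "y \<in> crown_vertices n"
  shows "gdist (crown_vertices n) crown_adj x y = crown_dist x y"
  using walk_crown_dist[OF assms] crown_dist_le_walk by (rule gdist_eqI)

definition crown_map :: "(nat \<Rightarrow> nat) \<Rightarrow> bool \<Rightarrow> nat \<times> bool \<Rightarrow> nat \<times> bool" where
  "crown_map \<sigma> flip = map_prod \<sigma> (if flip then Not else id)"

lemma bij_betw_crown_map:
  assumes "bij_betw \<sigma> {0..<n} {0..<n}"
  shows "bij_betw (crown_map \<sigma> flip) (crown_vertices n) (crown_vertices n)"
proof -
  have "bij Not" by (rule o_bij[where g = Not]) (simp_all add: fun_eq_iff)
  then have "bij (if flip then Not else id)" by simp
  with assms show ?thesis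
    unfolding crown_map_def crown_vertices_def by (rule bij_betw_map_prod)
qed

lemma crown_map_eq_iff:
  assumes "bij_betw \<sigma> {0..<n} {0..<n}" "x \<in> crown_vertices n" "y \<in> crown_vertices n"
  shows "fst (crown_map \<sigma> flip x) = fst (crown_map \<sigma> flip y) \<longleftrightarrow> fst x = fst y"
    and "snd (crown_map \<sigma> flip x) = snd (crown_map \<sigma> flip y) \<longleftrightarrow> snd x = snd y"
  using assms by (auto simp: crown_map_def bij_betw_def inj_on_def)

lemma crown_map_automorphism:
  assumes "bij_betw \<sigma> {0..<n} {0..<n}"
  shows "graph_automorphism (crown_vertices n) crown_adj (crown_map \<sigma> flip)"
  using bij_betw_crown_map[OF assms] crown_map_eq_iff[OF assms]
  by (auto simp: graph_automorphism_def crown_adj_def)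

lemma crown_dist_crown_map:
  assumes "bij_betw \<sigma> {0..<n} {0..<n}" "x \<in> crown_vertices n" "y \<in> crown_vertices n"
  shows "crown_dist (crown_map \<sigma> flip x) (crown_map \<sigma> flip y) = crown_dist x y"
  using crown_map_eq_iff[OF assms] by (simp add: crown_dist_eq_iff)

lemma crown_map_transitive:
  assumes "x \<in> crown_vertices n" "y \<in> crown_vertices n" "u \<in> crown_vertices n" "v \<in> crown_vertices n"
    and "crown_dist x y = crown_dist u v"
  obtains \<sigma> flip where "bij_betw \<sigma> {0..<n} {0..<n}"
    "crown_map \<sigma> flip x = u" "crown_map \<sigma> flip y = v"
proof -
  have pattern: "fst x = fst y \<longleftrightarrow> fst u = fst v" "snd x = snd y \<longleftrightarrow> snd u = snd v"
    using assms(5) by (simp_all add: crown_dist_eq_iff)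
  obtain \<sigma> where "bij_betw \<sigma> {0..<n} {0..<n}" "\<sigma> (fst x) = fst u" "\<sigma> (fst y) = fst v"
    using bij_betw_map_pair[of "fst x" "{0..<n}" "fst y" "fst u" "fst v"] assms(1-4) pattern(1)
    by auto
  moreover have "crown_map \<sigma> (snd x \<noteq> snd u) x = u" "crown_map \<sigma> (snd x \<noteq> snd u) y = v"
    using calculation pattern(2) by (auto simp: crown_map_def prod_eq_iff)
  ultimately show ?thesis using that by blast
qed

lemma crown_distance_transitive:
  assumes "3 \<le> n"
  shows "distance_transitive (crown_vertices n) crown_adj"
  unfolding distance_transitive_def connected_graph_def
proof (intro conjI ballI impI)
  fix x y assume "x \<in> crown_vertices n" "y \<in> crown_vertices n"
  then show "\<exists>k. walk (crown_vertices n) crown_adj k x y"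
    using walk_crown_dist[OF assms] by blast
next
  fix x y u v
  assume V: "x \<in> crown_vertices n" "y \<in> crown_vertices n" "u \<in> crown_vertices n" "v \<in> crown_vertices n"
    and "gdist (crown_vertices n) crown_adj x y = gdist (crown_vertices n) crown_adj u v"
  then have "crown_dist x y = crown_dist u v" by (simp add: gdist_crown[OF assms])
  then show "\<exists>f. graph_automorphism (crown_vertices n) crown_adj f \<and> f x = u \<and> f y = v"
    using crown_map_transitive[OF V] crown_map_automorphism by metis
qed

lemma crown_diameter:
  assumes "3 \<le> n"
  shows "has_diameter (crown_vertices n) crown_adj 3"
  unfolding has_diameter_def
proof (intro conjI)
  show "connected_graph (crown_vertices n) crown_adj"
    using crown_distance_transitive[OF assms] by (simp add: distance_transitive_def)
  show "\<forall>x\<in>crown_vertices n. \<forall>y\<in>crown_vertices n. gdist (crown_vertices n) crown_adj x y \<le> 3"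
    by (simp add: gdist_crown[OF assms] crown_dist_def)
  have "(0, True) \<in> crown_vertices n" "(0, False) \<in> crown_vertices n" using assms by auto
  then show "\<exists>x\<in>crown_vertices n. \<exists>y\<in>crown_vertices n. gdist (crown_vertices n) crown_adj x y = 3"
    by (force simp: gdist_crown[OF assms] crown_dist_def)
qed

lemma card_crown_neighbours:
  "card {z \<in> crown_vertices n. crown_adj y z \<and> P z} =
   card {c \<in> {0..<n} - {fst y}. P (c, \<not> snd y)}"
proof -
  have "{z \<in> crown_vertices n. crown_adj y z \<and> P z} =
        (\<lambda>c. (c, \<not> snd y)) ` {c \<in> {0..<n} - {fst y}. P (c, \<not> snd y)}"
    by (auto simp: crown_adj_def image_iff)
  then show ?thesis by (simp add: card_image inj_on_def)
qed

lemma crown_dist_index: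
  "crown_dist (a, s) (c, u) = (if c = a then (if u = s then 0 else 3) else (if u = s then 2 else 1))"
  by (simp add: crown_dist_def)

lemma crown_dist_cases:
  assumes "crown_dist (a, s) (b, t) = i"
  obtains "b = a" "t = s" "i = 0" | "b \<noteq> a" "t \<noteq> s" "i = 1" | "b \<noteq> a" "t = s" "i = 2"
    | "b = a" "t \<noteq> s" "i = 3"
  using assms by (cases "a = b"; cases "s = t") (auto simp: crown_dist_def)

lemma crown_card_farther_neighbours:
  assumes "x \<in> crown_vertices n" "y \<in> crown_vertices n" "crown_dist x y = i" "i < 3"
  shows "card {z \<in> crown_vertices n. crown_adj y z \<and> crown_dist x z = i + 1} = [n - 1, n - 2, 1] ! i"
proof -
  obtain a s b t where xy: "x = (a, s)" "y = (b, t)" by fastforce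
  have "a < n" "b < n" using assms xy by auto
  have "crown_dist (a, s) (b, t) = i" using assms(3) by (simp add: xy)
  show ?thesis
    unfolding xy card_crown_neighbours fst_conv snd_conv crown_dist_index
      card_filter_if_eq[OF finite_Diff[OF finite_atLeastLessThan]]
    using \<open>crown_dist (a, s) (b, t) = i\<close> assms(4) \<open>a < n\<close> \<open>b < n\<close>
    by (cases rule: crown_dist_cases) (simp_all add: card_Diff_singleton_if)
qed

lemma crown_card_closer_neighbours:
  assumes "x \<in> crown_vertices n" "y \<in> crown_vertices n" "crown_dist x y = i" "1 \<le> i"
  shows "card {z \<in> crown_vertices n. crown_adj y z \<and> crown_dist x z = i - 1} = [1, n - 2, n - 1] ! (i - 1)"
proof -
  obtain a s b t where xy: "x = (a, s)" "y = (b, t)" by fastforce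
  have "a < n" "b < n" using assms xy by auto
  have "crown_dist (a, s) (b, t) = i" using assms(3) by (simp add: xy)
  show ?thesis
    unfolding xy card_crown_neighbours fst_conv snd_conv crown_dist_index
      card_filter_if_eq[OF finite_Diff[OF finite_atLeastLessThan]]
    using \<open>crown_dist (a, s) (b, t) = i\<close> assms(4) \<open>a < n\<close> \<open>b < n\<close>
    by (cases rule: crown_dist_cases) (simp_all add: card_Diff_singleton_if)
qed

lemma crown_intersection_array:
  assumes "3 \<le> n"
  shows "has_intersection_array (crown_vertices n) crown_adj [n - 1, n - 2, 1] [1, n - 2, n - 1]"
  unfolding has_intersection_array_def
proof (intro conjI ballI allI impI)
  show "has_diameter (crown_vertices n) crown_adj (length [n - 1, n - 2, 1])"
    using crown_diameter[OF assms] by (simp add: numeral_3_eq_3)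
next
  fix x y i assume V: "x \<in> crown_vertices n" "y \<in> crown_vertices n"
  have layer: "{z \<in> crown_vertices n. crown_adj y z \<and> gdist (crown_vertices n) crown_adj x z = j} =
      {z \<in> crown_vertices n. crown_adj y z \<and> crown_dist x z = j}" for j
    using gdist_crown[OF assms V(1)] by auto
  {
    assume "i < length [n - 1, n - 2, 1]" "gdist (crown_vertices n) crown_adj x y = i"
    then show "card {z \<in> crown_vertices n. crown_adj y z \<and> gdist (crown_vertices n) crown_adj x z = i + 1} =
        [n - 1, n - 2, 1] ! i"
      unfolding layer using crown_card_farther_neighbours[OF V] gdist_crown[OF assms V] by simp
  next
    assume "1 \<le> i \<and> i \<le> length [1, n - 2, n - 1]" "gdist (crown_vertices n) crown_adj x y = i"
    then show "card {z \<in> crown_vertices n. crown_adj y z \<and> gdist (crown_vertices n) crown_adj x z = i - 1} =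
        [1, n - 2, n - 1] ! (i - 1)"
      unfolding layer using crown_card_closer_neighbours[OF V] gdist_crown[OF assms V] by simp
  }
qed simp

definition crown_color :: "nat \<times> bool \<Rightarrow> nat \<times> bool \<Rightarrow> color" where
  "crown_color x y = (if snd x = snd y then ColA else if fst x = fst y then ColC else ColB)"

lemma crown_coloring_eq_crown_color:
  assumes "3 \<le> n" "x \<in> crown_vertices n" "y \<in> crown_vertices n" "x \<noteq> y"
  shows "crown_coloring n x y = crown_color x y"
  using assms by (auto simp: crown_coloring_def gdist_crown crown_dist_def crown_color_def)

lemma mandatory_26_65_iff:
  "{#h, i, j#} \<in> mandatory_26_65 \<longleftrightarrow>
     (h, i, j) \<in> {(ColA, ColA, ColA), (ColA, ColB, ColB), (ColB, ColA, ColB), (ColB, ColB, ColA),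
       (ColA, ColB, ColC), (ColA, ColC, ColB), (ColB, ColA, ColC), (ColB, ColC, ColA),
       (ColC, ColA, ColB), (ColC, ColB, ColA)}"
  by (cases h; cases i; cases j) (simp_all add: mandatory_26_65_def add_eq_conv_diff)

lemma crown_color_triangle:
  assumes "x \<noteq> y" "y \<noteq> z" "x \<noteq> z"
  shows "{#crown_color x y, crown_color y z, crown_color x z#} \<in> mandatory_26_65"
  using assms by (auto simp: mandatory_26_65_iff crown_color_def prod_eq_iff)

lemma crown_color_witness:
  assumes "{#crown_color (a, s) (b, t), i, j#} \<in> mandatory_26_65" "(a, s) \<noteq> (b, t)"
    and "k \<noteq> a" "k \<noteq> b"
  shows "\<exists>z\<in>{(a, True), (a, False), (b, True), (b, False), (k, True), (k, False)}.
    z \<noteq> (a, s) \<and> z \<noteq> (b, t) \<and> crown_color (a, s) z = i \<and> crown_color z (b, t) = j"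
  using assms unfolding mandatory_26_65_iff
  by (cases s; cases t; cases "a = b") (auto simp: crown_color_def)

lemma crown_representation:
  assumes "3 \<le> n"
  shows "representation_26_65 (crown_vertices n) (crown_coloring n)"
  unfolding representation_26_65_def
proof (intro conjI allI ballI impI)
  fix x y assume "x \<in> crown_vertices n" "y \<in> crown_vertices n" "x \<noteq> y"
  then show "crown_coloring n x y = crown_coloring n y x"
    by (simp add: crown_coloring_eq_crown_color[OF assms] crown_color_def eq_commute)
next
  fix h
  obtain y where y: "y \<in> crown_vertices n" "y \<noteq> (0, True)" "crown_color (0, True) y = h"
  proof (cases h)
    case ColA
    then show thesis using assms by (intro that[of "(1, True)"]) (auto simp: crown_color_def)
  next
    case ColB
    then show thesis using assms by (intro that[of "(1, False)"]) (auto simp: crown_color_def)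
  next
    case ColC
    then show thesis using assms by (intro that[of "(0, False)"]) (auto simp: crown_color_def)
  qed
  have "(0, True) \<in> crown_vertices n" using assms by simp
  with y show "\<exists>x\<in>crown_vertices n. \<exists>y\<in>crown_vertices n. x \<noteq> y \<and> crown_coloring n x y = h"
    by (metis crown_coloring_eq_crown_color[OF assms])
next
  fix T x y i j
  assume T: "T \<in> mandatory_26_65" and V: "x \<in> crown_vertices n" "y \<in> crown_vertices n"
    and xy: "x \<noteq> y \<and> {#crown_coloring n x y, i, j#} = T"
  obtain a s b t where ab: "x = (a, s)" "y = (b, t)" by fastforce
  obtain k where k: "k < n" "k \<noteq> a" "k \<noteq> b" using third_index[OF assms] .
  have "crown_coloring n x y = crown_color x y"
    using crown_coloring_eq_crown_color[OF assms V] xy by blast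
  with T xy ab have "{#crown_color (a, s) (b, t), i, j#} \<in> mandatory_26_65" by simp
  moreover have "(a, s) \<noteq> (b, t)" using xy ab by simp
  ultimately have "\<exists>z\<in>{(a, True), (a, False), (b, True), (b, False), (k, True), (k, False)}.
      z \<noteq> (a, s) \<and> z \<noteq> (b, t) \<and> crown_color (a, s) z = i \<and> crown_color z (b, t) = j"
    by (rule crown_color_witness[OF _ _ k(2,3)])
  then obtain z where "z \<in> {(a, True), (a, False), (b, True), (b, False), (k, True), (k, False)}"
    and z: "z \<noteq> x" "z \<noteq> y" "crown_color x z = i" "crown_color z y = j"
    unfolding ab by blast
  then have "z \<in> crown_vertices n" using k V ab by auto
  with z V show "\<exists>z\<in>crown_vertices n. z \<noteq> x \<and> z \<noteq> y \<and> crown_coloring n x z = i \<and> crown_coloring n z y = j"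
    by (metis crown_coloring_eq_crown_color[OF assms])
next
  fix x y z assume "x \<in> crown_vertices n" "y \<in> crown_vertices n" "z \<in> crown_vertices n"
    and "x \<noteq> y \<and> y \<noteq> z \<and> x \<noteq> z"
  then show "{#crown_coloring n x y, crown_coloring n y z, crown_coloring n x z#} \<in> mandatory_26_65"
    using crown_color_triangle by (simp add: crown_coloring_eq_crown_color[OF assms])
qed

lemma crown_map_color_preserving:
  assumes "3 \<le> n" "bij_betw \<sigma> {0..<n} {0..<n}"
  shows "crown_map \<sigma> flip \<in> color_preserving_perms (crown_vertices n) (crown_coloring n)"
proof -
  have bij: "bij_betw (crown_map \<sigma> flip) (crown_vertices n) (crown_vertices n)"
    using bij_betw_crown_map[OF assms(2)] .
  have "crown_coloring n (crown_map \<sigma> flip x) (crown_map \<sigma> flip y) = crown_coloring n x y"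
    if "x \<in> crown_vertices n" "y \<in> crown_vertices n" for x y
  proof -
    have "crown_map \<sigma> flip x \<in> crown_vertices n" "crown_map \<sigma> flip y \<in> crown_vertices n"
      using bij_betwE[OF bij] that by blast+
    then have "gdist (crown_vertices n) crown_adj (crown_map \<sigma> flip x) (crown_map \<sigma> flip y) =
        gdist (crown_vertices n) crown_adj x y"
      using that by (simp add: gdist_crown[OF assms(1)] crown_dist_crown_map[OF assms(2)])
    then show ?thesis by (simp add: crown_coloring_def)
  qed
  with bij show ?thesis by (simp add: color_preserving_perms_def)
qed

lemma crown_dist_eq_if_same_pair_type:
  assumes "3 \<le> n" "x \<in> crown_vertices n" "y \<in> crown_vertices n" "u \<in> crown_vertices n"
    "v \<in> crown_vertices n" "same_pair_type (crown_coloring n) (x, y) (u, v)"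
  shows "crown_dist x y = crown_dist u v"
  using assms(6) crown_coloring_eq_crown_color[OF assms(1,2,3)] crown_coloring_eq_crown_color[OF assms(1,4,5)]
  by (auto simp: same_pair_type_def crown_color_def crown_dist_def split: if_splits)

lemma crown_algebraic_representation:
  assumes "3 \<le> n"
  shows "algebraic_representation (crown_vertices n) (crown_coloring n)"
proof (rule algebraic_representationI)
  show "finite (crown_vertices n)" by (simp add: crown_vertices_def)
  show "(0, True) \<in> crown_vertices n" using assms by simp
  show "\<exists>x\<in>crown_vertices n. \<exists>y\<in>crown_vertices n. x \<noteq> y \<and> crown_coloring n x y = h" for h
    using crown_representation[OF assms] by (simp add: representation_26_65_def)
  fix x y u v
  assume V: "x \<in> crown_vertices n" "y \<in> crown_vertices n" "u \<in> crown_vertices n" "v \<in> crown_vertices n"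
    and "same_pair_type (crown_coloring n) (x, y) (u, v)"
  then have "crown_dist x y = crown_dist u v" by (rule crown_dist_eq_if_same_pair_type[OF assms])
  then show "\<exists>f\<in>color_preserving_perms (crown_vertices n) (crown_coloring n). f x = u \<and> f y = v"
    using crown_map_transitive[OF V] crown_map_color_preserving[OF assms] by metis
qed

theorem mainTheorem8:
  fixes n :: nat
  assumes "n \<ge> 3"
  shows "distance_transitive (crown_vertices n) crown_adj
       \<and> has_diameter (crown_vertices n) crown_adj 3
       \<and> has_intersection_array (crown_vertices n) crown_adj [n - 1, n - 2, 1] [1, n - 2, n - 1]
       \<and> card (crown_vertices n) = 2 * n
       \<and> representation_26_65 (crown_vertices n) (crown_coloring n)
       \<and> algebraic_representation (crown_vertices n) (crown_coloring n)"
  using crown_distance_transitive[OF assms] crown_diameter[OF assms] crown_intersection_array[OF assms]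
    crown_representation[OF assms] crown_algebraic_representation[OF assms]
  by (simp add: crown_vertices_def card_cartesian_product)

end
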